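(* Let $k\ge0$ be an integer and let $G$ be a threshold graph such that $\mathrm{seq}(G)$ contains at least $k$ ones. Then a vertex $v\in V(G)$ lies in the $k$-core of $G$ if and only if $\deg_G(v)\ge k$.
   Context: A threshold graph on $n\ge1$ vertices is built from a base vertex $v_0$ by successively adding $v_1,\dots,v_{n-1}$, each either isolated (adjacent to no earlier vertex) or dominating (adjacent to all earlier vertices); its creation sequence $\mathrm{seq}(G)=s_1\cdots s_{n-1}$ has $s_i=1$ if $v_i$ is dominating and $s_i=0$ otherwise. The $k$-core of a graph is its maximum induced subgraph in which every vertex has degree at least $k$ (obtained by iteratively deleting vertices of degree less than $k$); it may be empty. *)

theory Defs
  imports Main
begin

text \<open>A simple graph is given by a vertex set V and a symmetric irreflexive
adjacency relation E.\<close>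

definition degree_in :: "'a set \<Rightarrow> ('a \<Rightarrow> 'a \<Rightarrow> bool) \<Rightarrow> 'a \<Rightarrow> nat" where
  "degree_in V E v = card {u \<in> V. E v u}"

text \<open>The k-core: the maximum vertex subset S of V whose induced subgraph has
minimum degree at least k (the union of all such sets, which is itself such a
set; possibly empty).\<close>

definition k_core :: "nat \<Rightarrow> 'a set \<Rightarrow> ('a \<Rightarrow> 'a \<Rightarrow> bool) \<Rightarrow> 'a set" where
  "k_core k V E = \<Union> {S. S \<subseteq> V \<and> (\<forall>v\<in>S. degree_in S E v \<ge> k)}"

text \<open>Threshold graph with creation sequence s = s_1 ... s_(n-1) (True = 1 =
dominating). Vertices v_0, ..., v_(n-1) are 0, ..., n-1 with n = length s + 1;
for i < j, v_i and v_j are adjacent iff v_j is dominating, i.e. s_j = 1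
(list index j - 1).\<close>

definition tg_vertices :: "bool list \<Rightarrow> nat set" where
  "tg_vertices s = {0..<Suc (length s)}"

definition tg_adj :: "bool list \<Rightarrow> nat \<Rightarrow> nat \<Rightarrow> bool" where
  "tg_adj s i j = (i \<noteq> j \<and> s ! (max i j - 1))"

end

theory Submission
  imports Defs
begin

text \<open>Let D be the set of dominating vertices; |D| is the number of ones in seq(G), and
  v_i v_j (i < j) is an edge iff v_j \<in> D. The forward direction holds in every graph.
  Conversely, D together with v_0 is a clique on |D| + 1 \<ge> k + 1 vertices, which settles
  v \<in> {v_0} \<union> D. Otherwise the neighbours of v are the dominating vertices after v, and
  v_0, ..., v_v together with these form a subgraph of minimum degree deg(v).\<close>


lemma card_le_degree_in:
  assumes "finite S" "A \<subseteq> S" "\<And>y. y \<in> A \<Longrightarrow> E w y"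
  shows "card A \<le> degree_in S E w"
  unfolding degree_in_def using assms by (intro card_mono) auto

lemma in_k_coreI:
  assumes "S \<subseteq> V" "v \<in> S" "\<And>w. w \<in> S \<Longrightarrow> k \<le> degree_in S E w"
  shows "v \<in> k_core k V E"
  unfolding k_core_def using assms by blast

lemma k_core_imp_degree_in:
  assumes "finite V" "v \<in> k_core k V E"
  shows "k \<le> degree_in V E v"
proof -
  obtain S where S: "S \<subseteq> V" "v \<in> S" "\<forall>w\<in>S. k \<le> degree_in S E w"
    using assms(2) unfolding k_core_def by blast
  have "degree_in S E v \<le> degree_in V E v"
    unfolding degree_in_def using S(1) assms(1) by (intro card_mono) auto
  with S show ?thesis by force
qed

lemma clique_subset_k_core:
  assumes "finite S" "S \<subseteq> V" "k < card S"
    and clique: "\<And>x y. x \<in> S \<Longrightarrow> y \<in> S \<Longrightarrow> x \<noteq> y \<Longrightarrow> E x y"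
  shows "S \<subseteq> k_core k V E"
proof
  fix v assume "v \<in> S"
  show "v \<in> k_core k V E"
  proof (rule in_k_coreI[OF assms(2) \<open>v \<in> S\<close>])
    fix w assume "w \<in> S"
    have "k \<le> card (S - {w})" using \<open>w \<in> S\<close> assms(1,3) by simp
    also have "\<dots> \<le> degree_in S E w" using assms(1) clique \<open>w \<in> S\<close> by (intro card_le_degree_in) auto
    finally show "k \<le> degree_in S E w" .
  qed
qed


definition tg_dominating :: "bool list \<Rightarrow> nat set" where
  "tg_dominating s = {j. 0 < j \<and> j \<le> length s \<and> s ! (j - 1)}"

lemma tg_dominating_subset_vertices: "tg_dominating s \<subseteq> tg_vertices s"
  unfolding tg_dominating_def tg_vertices_def by auto

lemma finite_tg_vertices [simp]: "finite (tg_vertices s)"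
  unfolding tg_vertices_def by simp

lemma card_tg_dominating: "card (tg_dominating s) = count_list s True"
proof -
  have "tg_dominating s = Suc ` {i. i < length s \<and> s ! i}"
    unfolding tg_dominating_def by (auto simp: image_iff gr0_conv_Suc)
  moreover have "count_list s True = length (filter id s)"
    by (induction s) auto
  ultimately show ?thesis by (simp add: card_image length_filter_conv_card)
qed

lemma tg_adj_iff:
  assumes "i \<in> tg_vertices s" "j \<in> tg_vertices s"
  shows "tg_adj s i j \<longleftrightarrow> i \<noteq> j \<and> max i j \<in> tg_dominating s"
  using assms unfolding tg_adj_def tg_dominating_def tg_vertices_def by (auto simp: max_def)

lemma tg_neighbours_non_dominating:
  assumes "v \<in> tg_vertices s" "v \<notin> tg_dominating s"
  shows "{u \<in> tg_vertices s. tg_adj s v u} = {d \<in> tg_dominating s. v < d}"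
proof -
  have "tg_adj s v u \<longleftrightarrow> u \<in> tg_dominating s \<and> v < u" if "u \<in> tg_vertices s" for u
    using assms that by (auto simp: tg_adj_iff max_def)
  then show ?thesis using tg_dominating_subset_vertices by auto
qed

lemma tg_dominating_in_k_core:
  assumes "k \<le> count_list s True" "v = 0 \<or> v \<in> tg_dominating s"
  shows "v \<in> k_core k (tg_vertices s) (tg_adj s)"
proof -
  let ?S = "insert 0 (tg_dominating s)"
  have "?S \<subseteq> tg_vertices s"
    using tg_dominating_subset_vertices by (auto simp: tg_vertices_def)
  moreover have "0 \<notin> tg_dominating s" by (simp add: tg_dominating_def)
  then have "k < card ?S"
    using assms(1) finite_subset[OF tg_dominating_subset_vertices] by (simp add: card_tg_dominating)
  moreover have "tg_adj s x y" if "x \<in> ?S" "y \<in> ?S" "x \<noteq> y" for x y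
    using that \<open>?S \<subseteq> tg_vertices s\<close> by (subst tg_adj_iff) (auto simp: max_def)
  ultimately have "?S \<subseteq> k_core k (tg_vertices s) (tg_adj s)"
    by (intro clique_subset_k_core) (auto intro: finite_subset)
  with assms(2) show ?thesis by auto
qed

lemma tg_non_dominating_in_k_core:
  assumes v: "v \<in> tg_vertices s" "v \<notin> tg_dominating s"
    and later: "k \<le> card {d \<in> tg_dominating s. v < d}"
  shows "v \<in> k_core k (tg_vertices s) (tg_adj s)"
proof -
  define A where "A = {d \<in> tg_dominating s. v < d}"
  define S where "S = {..v} \<union> A"
  have SV: "S \<subseteq> tg_vertices s"
    using v(1) tg_dominating_subset_vertices unfolding S_def A_def tg_vertices_def by auto
  have fin: "finite S" "finite A"
    using SV finite_subset[OF _ finite_tg_vertices] unfolding S_def by auto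
  have adj: "tg_adj s x y" if "x \<in> S" "y \<in> S" "x \<noteq> y" "max x y \<in> A" for x y
    using that SV unfolding A_def by (subst tg_adj_iff) auto
  show ?thesis
  proof (rule in_k_coreI[OF SV])
    show "v \<in> S" by (simp add: S_def)
  next
    fix w assume "w \<in> S"
    show "k \<le> degree_in S (tg_adj s) w"
    proof (cases "w \<le> v")
      case True
      have "card A \<le> degree_in S (tg_adj s) w"
        using True \<open>w \<in> S\<close> fin by (intro card_le_degree_in) (auto intro: adj simp: S_def A_def max_def)
      with later show ?thesis by (simp add: A_def)
    next
      case False
      then have "w \<in> A" using \<open>w \<in> S\<close> by (simp add: S_def)
      \<comment> \<open>w exchanges itself for v, which lies outside A\<close>
      have "card A = Suc (card (A - {w}))"
        using fin(2) \<open>w \<in> A\<close> by (rule card_Suc_Diff1[symmetric])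
      also have "\<dots> = card (insert v (A - {w}))"
        using fin(2) by (simp add: A_def)
      also have "\<dots> \<le> degree_in S (tg_adj s) w"
        using False \<open>w \<in> S\<close> \<open>w \<in> A\<close> fin
        by (intro card_le_degree_in) (auto intro!: adj simp: S_def max_def)
      finally show ?thesis using later by (simp add: A_def)
    qed
  qed
qed

theorem mainTheorem14:
  fixes k :: nat and s :: "bool list" and v :: nat
  assumes "count_list s True \<ge> k"
    and "v \<in> tg_vertices s"
  shows "v \<in> k_core k (tg_vertices s) (tg_adj s) \<longleftrightarrow>
         degree_in (tg_vertices s) (tg_adj s) v \<ge> k"
proof
  assume "v \<in> k_core k (tg_vertices s) (tg_adj s)"
  then show "k \<le> degree_in (tg_vertices s) (tg_adj s) v"
    by (intro k_core_imp_degree_in) simp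
next
  assume deg: "k \<le> degree_in (tg_vertices s) (tg_adj s) v"
  show "v \<in> k_core k (tg_vertices s) (tg_adj s)"
  proof (cases "v \<in> tg_dominating s")
    case True
    then show ?thesis using assms(1) by (intro tg_dominating_in_k_core) auto
  next
    case False
    with deg assms(2) show ?thesis
      by (intro tg_non_dominating_in_k_core)
         (simp_all add: degree_in_def tg_neighbours_non_dominating)
  qed
qed

end
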